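(* Let $G$ be a $\preceq$-freezing $d$-dimensional cellular automaton that simulates a $d$-dimensional cellular automaton $F$ via an encoding map $\bar\phi$. Then there exists a finite set $E\subseteq\mathbb{Z}^d$ such that, whenever a configuration $y$ is $E$-locally reachable by $F$ from a configuration $x$, we have $\bar\phi(y)\preceq\bar\phi(x)$ (cellwise, i.e. $\bar\phi(y)_z\preceq\bar\phi(x)_z$ for all $z\in\mathbb{Z}^d$).
   Context: A $d$-dimensional cellular automaton is $F=(d,Q,N,f)$ with $Q$ finite, $N\subset\mathbb{Z}^d$ finite, $f:Q^N\to Q$, global map $F(c)_z=f(c|_{z+N})$; it is $\preceq$-freezing for a partial order $\preceq$ on $Q$ if $F(c)_z\preceq c_z$ for all $c,z$. Simulation: $G$ simulates $F$ if there exist $T>0$, a rectangular block $B\subseteq\mathbb{Z}^d$ with size-vector $b$, a finite $C\subset\mathbb{Z}^d$ with $\vec0\in C$, and $\phi:Q_F^C\to Q_G^B$ such that the encoding map $\bar\phi$ defined by $\bar\phi(c)_{bz+r}=\phi(c|_{z+C})_r$ ($z\in\mathbb{Z}^d$, $r\in B$, $bz$ componentwise) is injective and satisfies $\bar\phi(F(c))=G^T(\bar\phi(c))$ for all $c$. Given a finite $E\subseteq\mathbb{Z}^d$, a configuration $y$ is $E$-locally reachable by $F$ from a configuration $x$ if for every $i\in\mathbb{Z}^d$ there are configurations $x^i,y^i$ with $x^i|_{i+E}=x|_{i+E}$, $y^i|_{i+E}=y|_{i+E}$, and $F^t(x^i)=y^i$ for some $t\geq0$. *)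

theory Defs
  imports Main
begin

text \<open>Points of Z^d are functions 'd => int for a finite index type 'd (so d = CARD('d)).
A configuration over state type 'q is a map (('d => int) => 'q).\<close>

type_synonym 'd pt = "'d \<Rightarrow> int"

definition vadd :: "'d pt \<Rightarrow> 'd pt \<Rightarrow> 'd pt" where
  "vadd u v = (\<lambda>k. u k + v k)"

definition vzero :: "'d pt" where
  "vzero = (\<lambda>k. 0)"

definition pattern :: "'d pt set \<Rightarrow> ('d pt \<Rightarrow> 'q) \<Rightarrow> 'd pt \<Rightarrow> ('d pt \<Rightarrow> 'q)" where
  "pattern W c z = (\<lambda>n. if n \<in> W then c (vadd z n) else undefined)"

text \<open>A cellular automaton (d, Q, N, f): Q is the (finite) type 'q, N a finite neighbourhood.\<close>
definition is_CA :: "'d::finite pt set \<Rightarrow> (('d pt \<Rightarrow> 'q::finite) \<Rightarrow> 'q) \<Rightarrow> bool" where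
  "is_CA N f \<longleftrightarrow> finite N"

definition global :: "'d pt set \<Rightarrow> (('d pt \<Rightarrow> 'q) \<Rightarrow> 'q) \<Rightarrow> ('d pt \<Rightarrow> 'q) \<Rightarrow> ('d pt \<Rightarrow> 'q)" where
  "global N f c = (\<lambda>z. f (pattern N c z))"

definition is_partial_order :: "('q \<Rightarrow> 'q \<Rightarrow> bool) \<Rightarrow> bool" where
  "is_partial_order le \<longleftrightarrow> (\<forall>a. le a a) \<and> (\<forall>a b. le a b \<and> le b a \<longrightarrow> a = b)
     \<and> (\<forall>a b c. le a b \<and> le b c \<longrightarrow> le a c)"

definition freezing :: "('q \<Rightarrow> 'q \<Rightarrow> bool) \<Rightarrow> 'd pt set \<Rightarrow> (('d pt \<Rightarrow> 'q) \<Rightarrow> 'q) \<Rightarrow> bool" where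
  "freezing le N f \<longleftrightarrow> (\<forall>c z. le (global N f c z) (c z))"

definition block :: "'d pt \<Rightarrow> 'd pt set" where
  "block b = {r. \<forall>k. 0 \<le> r k \<and> r k < b k}"

text \<open>Encoding map: phibar(c)_{bz+r} = phi(c|_{z+C})_r for r in B; every point p is uniquely
bz + r with z = p div b, r = p mod b componentwise.\<close>
definition encode :: "'d pt \<Rightarrow> 'd pt set \<Rightarrow> (('d pt \<Rightarrow> 'q) \<Rightarrow> ('d pt \<Rightarrow> 'g))
    \<Rightarrow> ('d pt \<Rightarrow> 'q) \<Rightarrow> ('d pt \<Rightarrow> 'g)" where
  "encode b C phi c = (\<lambda>p. phi (pattern C c (\<lambda>k. p k div b k)) (\<lambda>k. p k mod b k))"

definition simulates_via ::
  "'d pt set \<Rightarrow> (('d pt \<Rightarrow> 'g) \<Rightarrow> 'g) \<Rightarrow> 'd pt set \<Rightarrow> (('d pt \<Rightarrow> 'q) \<Rightarrow> 'q)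
   \<Rightarrow> nat \<Rightarrow> 'd pt \<Rightarrow> 'd pt set \<Rightarrow> (('d pt \<Rightarrow> 'q) \<Rightarrow> ('d pt \<Rightarrow> 'g)) \<Rightarrow> bool" where
  "simulates_via NG fG NF fF T b C phi \<longleftrightarrow>
     T > 0 \<and> (\<forall>k. b k > 0) \<and> finite C \<and> vzero \<in> C \<and>
     inj (encode b C phi) \<and>
     (\<forall>c. encode b C phi (global NF fF c) = (global NG fG ^^ T) (encode b C phi c))"

definition locally_reachable ::
  "'d pt set \<Rightarrow> (('d pt \<Rightarrow> 'q) \<Rightarrow> 'q) \<Rightarrow> 'd pt set \<Rightarrow> ('d pt \<Rightarrow> 'q) \<Rightarrow> ('d pt \<Rightarrow> 'q) \<Rightarrow> bool" where
  "locally_reachable NF fF E x y \<longleftrightarrow>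
     (\<forall>i. \<exists>xi yi t. (\<forall>e\<in>E. xi (vadd i e) = x (vadd i e)) \<and>
                     (\<forall>e\<in>E. yi (vadd i e) = y (vadd i e)) \<and>
                     (global NF fF ^^ t) xi = yi)"

end

theory Submission
  imports Defs
begin

text \<open>One step of F is T steps of G on encodings, and G never increases a cell, so the
encoding decreases cellwise along every F-orbit. The encoded cell z only reads the window
(z div b) + C of the configuration, so E = C suffices: local reachability on that window
provides an F-orbit agreeing with x and y there.\<close>

lemma is_partial_order_refl: "is_partial_order le \<Longrightarrow> le a a"
  unfolding is_partial_order_def by blast

lemma is_partial_order_trans: "is_partial_order le \<Longrightarrow> le a b \<Longrightarrow> le b c \<Longrightarrow> le a c"
  unfolding is_partial_order_def by blast

lemma funpow_pointwise_decreasing: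
  assumes po: "is_partial_order le" and decr: "\<And>c z. le (F c z) (c z)"
  shows "le ((F ^^ n) c z) (c z)"
proof (induction n)
  case 0
  show ?case by (simp add: is_partial_order_refl[OF po])
next
  case (Suc n)
  have "le (F ((F ^^ n) c) z) ((F ^^ n) c z)" by (rule decr)
  then show ?case using Suc.IH by (simp add: is_partial_order_trans[OF po])
qed

lemma freezing_funpow:
  assumes "is_partial_order le" and "freezing le N f"
  shows "le ((global N f ^^ n) c z) (c z)"
  using assms by (auto simp: freezing_def intro: funpow_pointwise_decreasing)

lemma simulates_via_funpow:
  assumes "simulates_via NG fG NF fF T b C phi"
  shows "encode b C phi ((global NF fF ^^ t) c) = (global NG fG ^^ (T * t)) (encode b C phi c)"
proof (induction t)
  case 0
  show ?case by simp
next
  case (Suc t)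
  have "encode b C phi ((global NF fF ^^ Suc t) c)
      = (global NG fG ^^ T) (encode b C phi ((global NF fF ^^ t) c))"
    using assms by (simp add: simulates_via_def)
  also have "\<dots> = (global NG fG ^^ (T * Suc t)) (encode b C phi c)"
    by (simp add: Suc.IH funpow_add)
  finally show ?case .
qed

lemma encode_cong_window:
  assumes "\<forall>e\<in>C. u (vadd (\<lambda>k. p k div b k) e) = v (vadd (\<lambda>k. p k div b k) e)"
  shows "encode b C phi u p = encode b C phi v p"
proof -
  have "pattern C u (\<lambda>k. p k div b k) = pattern C v (\<lambda>k. p k div b k)"
    using assms by (auto simp: pattern_def)
  then show ?thesis by (simp add: encode_def)
qed

theorem mainTheorem9:
  fixes NF :: "'d::finite pt set" and fF :: "('d pt \<Rightarrow> 'q::finite) \<Rightarrow> 'q"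
    and NG :: "'d pt set" and fG :: "('d pt \<Rightarrow> 'g::finite) \<Rightarrow> 'g"
    and le :: "'g \<Rightarrow> 'g \<Rightarrow> bool"
    and T :: nat and b :: "'d pt" and C :: "'d pt set"
    and phi :: "('d pt \<Rightarrow> 'q) \<Rightarrow> ('d pt \<Rightarrow> 'g)"
  assumes "is_CA NF fF" and "is_CA NG fG"
    and "is_partial_order le" and "freezing le NG fG"
    and "simulates_via NG fG NF fF T b C phi"
  shows "\<exists>E. finite E \<and> (\<forall>x y. locally_reachable NF fF E x y \<longrightarrow>
            (\<forall>z. le (encode b C phi y z) (encode b C phi x z)))"
proof (intro exI conjI allI impI)
  show "finite C" using assms(5) by (simp add: simulates_via_def)
next
  fix x y z
  assume "locally_reachable NF fF C x y"
  then obtain xi yi t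
    where xi: "\<forall>e\<in>C. xi (vadd (\<lambda>k. z k div b k) e) = x (vadd (\<lambda>k. z k div b k) e)"
      and yi: "\<forall>e\<in>C. yi (vadd (\<lambda>k. z k div b k) e) = y (vadd (\<lambda>k. z k div b k) e)"
      and orbit: "(global NF fF ^^ t) xi = yi"
    unfolding locally_reachable_def by blast
  have "le (encode b C phi yi z) (encode b C phi xi z)"
    using freezing_funpow[OF assms(3,4)] simulates_via_funpow[OF assms(5), of t xi] orbit
    by simp
  moreover have "encode b C phi xi z = encode b C phi x z"
    by (rule encode_cong_window[OF xi])
  moreover have "encode b C phi yi z = encode b C phi y z"
    by (rule encode_cong_window[OF yi])
  ultimately show "le (encode b C phi y z) (encode b C phi x z)" by simp
qed

end
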